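(* Let $\mathcal Z$ be an instance space, $\mathcal W$ a hypothesis space and $\ell:\mathcal W\times\mathcal Z\to\mathbb R^+$ a non-negative loss function. Let $\mu$ (source) and $\mu'$ (target) be probability distributions on $\mathcal Z$ with $\mu\ll\mu'$. Fix $n$ and $\beta\in(0,1)$ with $\beta n$ an integer, and let $S'=\{Z_1,\dots,Z_{\beta n}\}$ be drawn IID from $\mu'$ and $S=\{Z_{\beta n+1},\dots,Z_n\}$ be drawn IID from $\mu$, independently. For $\alpha\in[0,1]$ define $$\hat L_\alpha(w,S,S')=\frac{\alpha}{\beta n}\sum_{i=1}^{\beta n}\ell(w,Z_i)+\frac{1-\alpha}{(1-\beta)n}\sum_{i=\beta n+1}^{n}\ell(w,Z_i),$$ and let $W_{\mathsf{ERM}}=\operatorname{argmin}_{w}\hat L_\alpha(w,S,S')$, produced by a (possibly randomized) algorithm described by a conditional distribution $P_{W|SS'}$. Let $L_{\mu'}(w)=\mathbb E_{Z\sim\mu'}[\ell(w,Z)]$ and $\mathrm{gen}(W_{\mathsf{ERM}},S,S')=L_{\mu'}(W_{\mathsf{ERM}})-\hat L_\alpha(W_{\mathsf{ERM}},S,S')$. Let $P_W$ be the marginal distribution of $W_{\mathsf{ERM}}$. Assume there are $b_-<0<b_+$ and a function $\psi$ such that, under the product distribution $(W,Z)\sim P_W\otimes\mu'$, for all $\lambda\in(b_-,b_+)$, $$\log\mathbb E\big[e^{\lambda(\ell(W,Z)-\mathbb E[\ell(W,Z)])}\big]\le\psi(\lambda).$$ Define $\psi^{*-1}_{-}(x)=\inf_{\lambda\in[0,-b_-)}\frac{x+\psi(-\lambda)}{\lambda}$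 and $\psi^{*-1}_{+}(x)=\inf_{\lambda\in[0,b_+)}\frac{x+\psi(\lambda)}{\lambda}$. Then $$\mathbb E_{WSS'}[\mathrm{gen}(W_{\mathsf{ERM}},S,S')]\le\frac{\alpha}{\beta n}\sum_{i=1}^{\beta n}\psi^{*-1}_{-}(I(W_{\mathsf{ERM}};Z_i))+\frac{1-\alpha}{(1-\beta)n}\sum_{i=\beta n+1}^{n}\psi^{*-1}_{-}\big(I(W_{\mathsf{ERM}};Z_i)+D(\mu\|\mu')\big),$$ $$-\mathbb E_{WSS'}[\mathrm{gen}(W_{\mathsf{ERM}},S,S')]\le\frac{\alpha}{\beta n}\sum_{i=1}^{\beta n}\psi^{*-1}_{+}(I(W_{\mathsf{ERM}};Z_i))+\frac{1-\alpha}{(1-\beta)n}\sum_{i=\beta n+1}^{n}\psi^{*-1}_{+}\big(I(W_{\mathsf{ERM}};Z_i)+D(\mu\|\mu')\big).$$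
   Context: $I(\cdot;\cdot)$ denotes mutual information and $D(\mu\|\mu')$ the Kullback–Leibler divergence. The expectation $\mathbb E_{WSS'}$ is over the joint distribution $P_{WSS'}(w,z^n)=P_{W|SS'}(w|z^n)\prod_{i=1}^{\beta n}\mu'(z_i)\prod_{i=\beta n+1}^n\mu(z_i)$, and mutual informations are computed under this joint distribution. *)

theory Defs
  imports "HOL-Probability.Probability"
begin

definition KL_ext :: "real \<Rightarrow> 'a measure \<Rightarrow> 'a measure \<Rightarrow> ereal" where
  "KL_ext b M N =
     (if absolutely_continuous M N \<and> integrable N (entropy_density b M N)
      then ereal (KL_divergence b M N) else \<infinity>)"

definition MI_ext :: "real \<Rightarrow> 'a measure \<Rightarrow> 'b measure \<Rightarrow> 'c measure
    \<Rightarrow> ('a \<Rightarrow> 'b) \<Rightarrow> ('a \<Rightarrow> 'c) \<Rightarrow> ereal" where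
  "MI_ext b P S T X Y =
     KL_ext b (distr P S X \<Otimes>\<^sub>M distr P T Y) (distr P (S \<Otimes>\<^sub>M T) (\<lambda>x. (X x, Y x)))"

text \<open>Generalized inverse  inf over lambda in (0,c) of (x + g lambda) / lambda.
  psi_{*-1}_+ x = psi_inv psi b_+ x ; psi_{*-1}_- x = psi_inv (\<lambda>l. psi (-l)) (-b_-) x.\<close>
definition psi_inv :: "(real \<Rightarrow> real) \<Rightarrow> real \<Rightarrow> ereal \<Rightarrow> ereal" where
  "psi_inv g c x = (INF l\<in>{0<..<c}. (x + ereal (g l)) / ereal l)"

text \<open>Weighted empirical risk; samples z 1 .. z k from the target, z (k+1) .. z n
  from the source, with k = beta n.\<close>
definition Lhat :: "('w \<Rightarrow> 'z \<Rightarrow> real) \<Rightarrow> real \<Rightarrow> real \<Rightarrow> nat \<Rightarrow> nat \<Rightarrow> 'w \<Rightarrow> (nat \<Rightarrow> 'z) \<Rightarrow> real" where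
  "Lhat loss \<alpha> \<beta> k n w z =
     \<alpha> / (\<beta> * real n) * (\<Sum>i\<in>{1..k}. loss w (z i))
     + (1 - \<alpha>) / ((1 - \<beta>) * real n) * (\<Sum>i\<in>{k+1..n}. loss w (z i))"

definition pop_risk :: "('w \<Rightarrow> 'z \<Rightarrow> real) \<Rightarrow> 'z measure \<Rightarrow> 'w \<Rightarrow> real" where
  "pop_risk loss \<mu> w = (\<integral>z. loss w z \<partial>\<mu>)"

definition gen_err :: "('w \<Rightarrow> 'z \<Rightarrow> real) \<Rightarrow> 'z measure \<Rightarrow> real \<Rightarrow> real \<Rightarrow> nat \<Rightarrow> nat
    \<Rightarrow> 'w \<Rightarrow> (nat \<Rightarrow> 'z) \<Rightarrow> real" where
  "gen_err loss \<mu>' \<alpha> \<beta> k n w z = pop_risk loss \<mu>' w - Lhat loss \<alpha> \<beta> k n w z"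

end

theory Submission
  imports Defs
begin

(* Fix a sample index i and compare the joint law of (W, Z_i) with the product law P_W x mu'.
  The Donsker-Varadhan change of measure gives, for every lambda in (b_-, b_+),
  lambda (E loss(W, Z_i) - E_{P_W x mu'} loss) <= D(P_{W Z_i} || P_W x mu') + psi(lambda),
  and optimising over the sign and size of lambda bounds the deviation of sample i by
  psi^{*-1}_-/+ of that divergence. For a target sample the divergence is I(W; Z_i); for a
  source sample the chain rule through P_W x mu gives I(W; Z_i) + D(mu || mu').
  Since the weights alpha/(beta n) and (1-alpha)/((1-beta) n) sum to one over the samples,
  the expected generalization error is exactly the weighted sum of these deviations. *)

lemma donsker_varadhan_density:
  fixes Q :: "'b measure" and h f :: "'b \<Rightarrow> real"
  assumes Q: "prob_space Q" and P: "prob_space P"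
    and P_density: "P = density Q (\<lambda>x. ennreal (h x))"
    and h_meas[measurable]: "h \<in> borel_measurable Q" and h_nonneg: "\<And>x. 0 \<le> h x"
    and f_meas[measurable]: "f \<in> borel_measurable Q"
    and f_int: "integrable P f" and ln_h_int: "integrable P (\<lambda>x. ln (h x))"
    and exp_f_int: "integrable Q (\<lambda>x. exp (f x))"
  shows "(\<integral>x. f x \<partial>P) \<le> (\<integral>x. ln (h x) \<partial>P) + ln (\<integral>x. exp (f x) \<partial>Q)"
proof -
  interpret Q: prob_space Q by fact
  interpret P: prob_space P by fact
  define c where "c = ln (\<integral>x. exp (f x) \<partial>Q)"
  have "0 < (\<integral>x. exp (f x) \<partial>Q)"
    using exp_f_int by (simp add: integral_nonneg_AE integral_nonneg_eq_0_iff_AE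
        order.strict_iff_order Q.AE_False)
  then have exp_c: "exp c = (\<integral>x. exp (f x) \<partial>Q)"
    by (simp add: c_def)
  \<comment> \<open>Apply \<open>ln q \<le> q - 1\<close> to \<open>q = exp (f - c) / h\<close>, whose \<open>P\<close>-mean is at most \<open>E\<^sub>Q exp (f - c) = 1\<close>.\<close>
  define q where "q x = exp (f x - c) / h x" for x
  have [measurable]: "q \<in> borel_measurable Q"
    unfolding q_def by measurable
  have [measurable]: "f \<in> borel_measurable P" "h \<in> borel_measurable P" "q \<in> borel_measurable P"
    by (simp_all add: P_density)
  have "AE x in P. 0 < h x"
    unfolding P_density by (subst AE_density) auto
  then have ln_q: "AE x in P. f x - c - ln (h x) \<le> q x - 1"
  proof eventually_elim
    case (elim x)
    then have "ln (q x) = f x - c - ln (h x)"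
      by (simp add: q_def ln_div)
    moreover have "ln (q x) \<le> q x - 1"
      using elim by (intro ln_le_minus_one) (simp add: q_def)
    ultimately show ?case by simp
  qed
  have exp_f_c_int: "integrable Q (\<lambda>x. exp (f x - c))"
    using exp_f_int by (simp add: exp_diff)
  have hq_le: "\<bar>h x * q x\<bar> \<le> exp (f x - c)" for x
    using h_nonneg[of x] by (simp add: q_def)
  have hq_int: "integrable Q (\<lambda>x. h x * q x)"
    by (rule Bochner_Integration.integrable_bound[OF exp_f_c_int]) (auto simp: q_def hq_le)
  then have q_int: "integrable P q"
    unfolding P_density by (subst integrable_density) (use h_nonneg in \<open>auto simp: q_def\<close>)
  have "(\<integral>x. q x \<partial>P) = (\<integral>x. h x * q x \<partial>Q)"
    unfolding P_density by (subst integral_density) (use h_nonneg in \<open>auto simp: q_def\<close>)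
  also have "\<dots> \<le> (\<integral>x. exp (f x - c) \<partial>Q)"
    by (rule integral_mono[OF hq_int exp_f_c_int]) (use hq_le abs_ge_self order_trans in blast)
  also have "\<dots> = 1"
    using exp_c \<open>0 < (\<integral>x. exp (f x) \<partial>Q)\<close> by (simp add: exp_diff)
  finally have "(\<integral>x. q x \<partial>P) \<le> 1" .
  moreover have "(\<integral>x. f x - c - ln (h x) \<partial>P) \<le> (\<integral>x. q x - 1 \<partial>P)"
    by (rule integral_mono_AE) (use f_int ln_h_int q_int ln_q in auto)
  ultimately show ?thesis
    using f_int ln_h_int q_int by (simp add: P.prob_space c_def)
qed

lemma KL_ext_density_eq:
  fixes Q P :: "'b measure" and h :: "'b \<Rightarrow> real"
  assumes Q: "prob_space Q" and h_meas[measurable]: "h \<in> borel_measurable Q"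
    and h_nonneg: "\<And>x. 0 \<le> h x"
    and P_density: "P = density Q (\<lambda>x. ennreal (h x))"
    and ln_h_int: "integrable P (\<lambda>x. ln (h x))"
  shows "KL_ext (exp 1) Q P = ereal (\<integral>x. ln (h x) \<partial>P)"
proof -
  interpret Q: prob_space Q by fact
  have sets_P: "sets P = sets Q"
    by (simp add: P_density)
  have ac: "absolutely_continuous Q P"
    unfolding P_density by (rule absolutely_continuousI_density) simp
  have "AE x in Q. RN_deriv Q P x = ennreal (h x)"
    using Q.RN_deriv_unique[OF _ P_density[symmetric]] by (auto elim: eventually_mono)
  then have "AE x in Q. entropy_density (exp 1) Q P x = ln (h x)"
    by eventually_elim (simp add: entropy_density_def log_def h_nonneg)
  then have density_eq: "AE x in P. entropy_density (exp 1) Q P x = ln (h x)"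
    by (rule absolutely_continuous_AE[OF sets_P ac])
  have [measurable]: "entropy_density (exp 1) Q P \<in> borel_measurable P"
    "(\<lambda>x. ln (h x)) \<in> borel_measurable P"
    by (simp_all add: sets_P cong: measurable_cong_sets)
  have "integrable P (entropy_density (exp 1) Q P)"
    using ln_h_int integrable_cong_AE[OF _ _ density_eq] by simp
  moreover have "KL_divergence (exp 1) Q P = (\<integral>x. ln (h x) \<partial>P)"
    unfolding KL_divergence_def using integral_cong_AE[OF _ _ density_eq] by simp
  ultimately show ?thesis
    using ac by (simp add: KL_ext_def)
qed

lemma KL_ext_finite_imp_density:
  fixes Q P :: "'b measure"
  assumes Q: "prob_space Q" and P: "prob_space P" and sets_P: "sets P = sets Q"
    and finite: "KL_ext (exp 1) Q P \<noteq> \<infinity>"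
  obtains h where "h \<in> borel_measurable Q" "\<And>x. 0 \<le> h x"
    "P = density Q (\<lambda>x. ennreal (h x))" "integrable P (\<lambda>x. ln (h x))"
proof
  interpret Q: prob_space Q by fact
  interpret P: prob_space P by fact
  have ac: "absolutely_continuous Q P" and int: "integrable P (entropy_density (exp 1) Q P)"
    using finite unfolding KL_ext_def by (auto split: if_splits)
  define h where "h x = enn2real (RN_deriv Q P x)" for x
  show h_meas: "h \<in> borel_measurable Q"
    unfolding h_def by measurable
  show "\<And>x. 0 \<le> h x"
    by (simp add: h_def)
  have "AE x in Q. RN_deriv Q P x = ennreal (h x)"
    using Q.RN_deriv_finite[OF P.sigma_finite_measure_axioms ac sets_P]
    by eventually_elim (auto simp: less_top h_def)
  then have "density Q (RN_deriv Q P) = density Q (\<lambda>x. ennreal (h x))"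
    using h_meas by (intro density_cong) auto
  then show "P = density Q (\<lambda>x. ennreal (h x))"
    using Q.density_RN_deriv[OF ac sets_P] by simp
  show "integrable P (\<lambda>x. ln (h x))"
    using int by (simp add: entropy_density_def h_def log_def comp_def)
qed

lemma integral_le_KL_ext_plus_ln_integral_exp:
  fixes Q P :: "'b measure" and f :: "'b \<Rightarrow> real"
  assumes Q: "prob_space Q" and P: "prob_space P" and sets_P: "sets P = sets Q"
    and f_meas: "f \<in> borel_measurable Q" and f_int: "integrable P f"
    and exp_f_int: "integrable Q (\<lambda>x. exp (f x))"
  shows "ereal (\<integral>x. f x \<partial>P) \<le> KL_ext (exp 1) Q P + ereal (ln (\<integral>x. exp (f x) \<partial>Q))"
proof (cases "KL_ext (exp 1) Q P = \<infinity>")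
  case False
  then obtain h where h: "h \<in> borel_measurable Q" "\<And>x. 0 \<le> h x"
    "P = density Q (\<lambda>x. ennreal (h x))" "integrable P (\<lambda>x. ln (h x))"
    using KL_ext_finite_imp_density[OF Q P sets_P] by blast
  show ?thesis
    using donsker_varadhan_density[OF Q P h(3,1,2) f_meas f_int h(4) exp_f_int]
    by (simp add: KL_ext_density_eq[OF Q h(1,2,3,4)])
qed simp

lemma KL_ext_density_chain:
  fixes Q R P :: "'b measure" and g :: "'b \<Rightarrow> real"
  assumes Q: "prob_space Q" and R: "prob_space R" and P: "prob_space P"
    and g_meas[measurable]: "g \<in> borel_measurable Q" and g_nonneg: "\<And>x. 0 \<le> g x"
    and R_density: "R = density Q (\<lambda>x. ennreal (g x))"
    and sets_P: "sets P = sets Q" and ln_g_int: "integrable P (\<lambda>x. ln (g x))"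
    and finite: "KL_ext (exp 1) R P \<noteq> \<infinity>"
  shows "KL_ext (exp 1) Q P = KL_ext (exp 1) R P + ereal (\<integral>x. ln (g x) \<partial>P)"
proof -
  have sets_R: "sets R = sets Q"
    by (simp add: R_density)
  obtain h where h_meas_R: "h \<in> borel_measurable R" and h_nonneg: "\<And>x. 0 \<le> h x"
    and P_density: "P = density R (\<lambda>x. ennreal (h x))" and ln_h_int: "integrable P (\<lambda>x. ln (h x))"
    using KL_ext_finite_imp_density[OF R P _ finite] sets_P sets_R by metis
  have h_meas[measurable]: "h \<in> borel_measurable Q"
    using h_meas_R by (simp add: sets_R cong: measurable_cong_sets)
  have "P = density Q (\<lambda>x. ennreal (g x) * ennreal (h x))"
    unfolding P_density R_density by (rule density_density_eq) auto
  then have P_density_Q: "P = density Q (\<lambda>x. ennreal (g x * h x))"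
    by (simp add: ennreal_mult g_nonneg h_nonneg)
  have "AE x in P. 0 < g x * h x"
    unfolding P_density_Q by (subst AE_density) auto
  then have ln_mult_ae: "AE x in P. ln (g x * h x) = ln (g x) + ln (h x)"
    by eventually_elim (use g_nonneg h_nonneg in \<open>auto simp: ln_mult zero_less_mult_iff\<close>)
  have [measurable]: "(\<lambda>x. ln (g x * h x)) \<in> borel_measurable P"
    "(\<lambda>x. ln (g x) + ln (h x)) \<in> borel_measurable P"
    by (simp_all add: sets_P cong: measurable_cong_sets)
  have ln_gh_int: "integrable P (\<lambda>x. ln (g x * h x))"
    using integrable_cong_AE[OF _ _ ln_mult_ae] ln_g_int ln_h_int by simp
  have "KL_ext (exp 1) Q P = ereal (\<integral>x. ln (g x * h x) \<partial>P)"
    using Q P_density_Q ln_gh_int g_nonneg h_nonneg by (intro KL_ext_density_eq) auto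
  also have "\<dots> = ereal (\<integral>x. ln (h x) \<partial>P) + ereal (\<integral>x. ln (g x) \<partial>P)"
    using integral_cong_AE[OF _ _ ln_mult_ae] ln_g_int ln_h_int by simp
  also have "\<dots> = KL_ext (exp 1) R P + ereal (\<integral>x. ln (g x) \<partial>P)"
    using KL_ext_density_eq[OF R h_meas_R h_nonneg P_density ln_h_int] by simp
  finally show ?thesis .
qed

lemma KL_ext_pair_measure_le:
  fixes PW :: "'w measure" and \<mu> \<mu>' :: "'z measure" and P :: "('w \<times> 'z) measure"
  assumes PW: "prob_space PW" and mu: "prob_space \<mu>" and mu': "prob_space \<mu>'"
    and sets_mu: "sets \<mu> = sets \<mu>'" and P: "prob_space P"
    and sets_P: "sets P = sets (PW \<Otimes>\<^sub>M \<mu>')" and snd_P: "distr P \<mu>' snd = \<mu>"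
  shows "KL_ext (exp 1) (PW \<Otimes>\<^sub>M \<mu>') P \<le> KL_ext (exp 1) (PW \<Otimes>\<^sub>M \<mu>) P + KL_ext (exp 1) \<mu>' \<mu>"
proof (cases "KL_ext (exp 1) (PW \<Otimes>\<^sub>M \<mu>) P = \<infinity> \<or> KL_ext (exp 1) \<mu>' \<mu> = \<infinity>")
  case True
  then show ?thesis
    by (auto simp: KL_ext_def)
next
  case False
  interpret mu: prob_space \<mu> by fact
  interpret mu': prob_space \<mu>' by fact
  obtain g where g_meas[measurable]: "g \<in> borel_measurable \<mu>'" and g_nonneg: "\<And>z. 0 \<le> g z"
    and mu_density: "\<mu> = density \<mu>' (\<lambda>z. ennreal (g z))" and ln_g_int: "integrable \<mu> (\<lambda>z. ln (g z))"
    using KL_ext_finite_imp_density[OF mu' mu sets_mu] False by metis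
  have "PW \<Otimes>\<^sub>M \<mu> = density PW (\<lambda>_. 1) \<Otimes>\<^sub>M density \<mu>' (\<lambda>z. ennreal (g z))"
    using mu_density by (simp add: density_1)
  also have "\<dots> = density (PW \<Otimes>\<^sub>M \<mu>') (\<lambda>(w, z). 1 * ennreal (g z))"
    by (rule pair_measure_density)
      (auto simp flip: mu_density intro: mu.sigma_finite_measure_axioms mu'.sigma_finite_measure_axioms)
  finally have PW_mu_density: "PW \<Otimes>\<^sub>M \<mu> = density (PW \<Otimes>\<^sub>M \<mu>') (\<lambda>x. ennreal (g (snd x)))"
    by (simp add: case_prod_beta')
  have snd_meas: "snd \<in> measurable P \<mu>'"
    by (simp add: sets_P cong: measurable_cong_sets)
  have ln_g_snd_int: "integrable P (\<lambda>x. ln (g (snd x)))"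
    using ln_g_int integrable_distr_eq[OF snd_meas, of "\<lambda>z. ln (g z)"] snd_P by simp
  have "(\<integral>x. ln (g (snd x)) \<partial>P) = (\<integral>z. ln (g z) \<partial>\<mu>)"
    using integral_distr[OF snd_meas, of "\<lambda>z. ln (g z)"] snd_P by simp
  then have "ereal (\<integral>x. ln (g (snd x)) \<partial>P) = KL_ext (exp 1) \<mu>' \<mu>"
    using KL_ext_density_eq[OF mu' g_meas g_nonneg mu_density ln_g_int] by simp
  moreover have "KL_ext (exp 1) (PW \<Otimes>\<^sub>M \<mu>') P
      = KL_ext (exp 1) (PW \<Otimes>\<^sub>M \<mu>) P + ereal (\<integral>x. ln (g (snd x)) \<partial>P)"
    using False g_nonneg sets_P ln_g_snd_int
    by (intro KL_ext_density_chain PW_mu_density prob_space_pair PW mu mu' P) auto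
  ultimately show ?thesis
    by simp
qed

lemma ereal_le_psi_inv:
  fixes a c :: real and D :: ereal and g :: "real \<Rightarrow> real"
  assumes "\<And>l. 0 < l \<Longrightarrow> l < c \<Longrightarrow> ereal (l * a) \<le> D + ereal (g l)"
  shows "ereal a \<le> psi_inv g c D"
  unfolding psi_inv_def
proof (rule INF_greatest)
  fix l assume "l \<in> {0<..<c}"
  then show "ereal a \<le> (D + ereal (g l)) / ereal l"
    using assms[of l] by (simp add: ereal_le_divide_pos)
qed

lemma psi_inv_bounds:
  fixes d bm bp :: real and D :: ereal and \<psi> :: "real \<Rightarrow> real"
  assumes "bm < 0" "0 < bp"
    and "\<And>l. bm < l \<Longrightarrow> l < bp \<Longrightarrow> ereal (l * d) \<le> D + ereal (\<psi> l)"
  shows "ereal (- d) \<le> psi_inv (\<lambda>l. \<psi> (- l)) (- bm) D" and "ereal d \<le> psi_inv \<psi> bp D"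
proof -
  show "ereal (- d) \<le> psi_inv (\<lambda>l. \<psi> (- l)) (- bm) D"
  proof (rule ereal_le_psi_inv)
    fix l :: real assume "0 < l" "l < - bm"
    then have "ereal ((- l) * d) \<le> D + ereal (\<psi> (- l))"
      using assms(1,2) by (intro assms(3)) simp_all
    then show "ereal (l * - d) \<le> D + ereal (\<psi> (- l))"
      by simp
  qed
  show "ereal d \<le> psi_inv \<psi> bp D"
    by (rule ereal_le_psi_inv) (use assms in simp)
qed

lemma ereal_mult_sum_le:
  fixes c :: real and x :: "'i \<Rightarrow> real" and y :: "'i \<Rightarrow> ereal"
  assumes "0 \<le> c" and "\<And>i. 0 < c \<Longrightarrow> i \<in> I \<Longrightarrow> ereal (x i) \<le> y i"
  shows "ereal (c * (\<Sum>i\<in>I. x i)) \<le> ereal c * (\<Sum>i\<in>I. y i)"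
proof (cases "c = 0")
  case True
  then show ?thesis
    by (simp flip: zero_ereal_def)
next
  case False
  then have "ereal (\<Sum>i\<in>I. x i) \<le> (\<Sum>i\<in>I. y i)"
    using assms by (simp flip: sum_ereal add: sum_mono)
  then show ?thesis
    using assms(1) by (simp add: ereal_mult_left_mono flip: times_ereal.simps)
qed

lemma integrable_nonneg_add_left:
  fixes f g :: "'b \<Rightarrow> real"
  assumes "integrable M (\<lambda>x. f x + g x)" "f \<in> borel_measurable M"
    and "\<And>x. 0 \<le> f x" "\<And>x. 0 \<le> g x"
  shows "integrable M f"
  using assms by (intro Bochner_Integration.integrable_bound[OF assms(1,2)]) auto

lemma integral_weighted_sum_nonneg:
  fixes L :: "'i \<Rightarrow> 'b \<Rightarrow> real" and c :: real
  assumes c: "0 \<le> c" and I: "finite I"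
    and int: "integrable M (\<lambda>x. c * (\<Sum>i\<in>I. L i x))"
    and L_nonneg: "\<And>i x. 0 \<le> L i x" and L_meas: "\<And>i. i \<in> I \<Longrightarrow> L i \<in> borel_measurable M"
  shows "(\<integral>x. c * (\<Sum>i\<in>I. L i x) \<partial>M) = c * (\<Sum>i\<in>I. \<integral>x. L i x \<partial>M)"
    and "0 < c \<Longrightarrow> i \<in> I \<Longrightarrow> integrable M (L i)"
proof -
  show L_int: "integrable M (L i)" if "0 < c" "i \<in> I" for i
  proof (rule Bochner_Integration.integrable_bound)
    show "integrable M (\<lambda>x. \<Sum>i\<in>I. L i x)"
      using int that by simp
    show "AE x in M. norm (L i x) \<le> norm (\<Sum>i\<in>I. L i x)"
      using member_le_sum[of i I "\<lambda>i. L i _"] L_nonneg I that by (auto simp: sum_nonneg)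
  qed (use L_meas that in simp)
  show "(\<integral>x. c * (\<Sum>i\<in>I. L i x) \<partial>M) = c * (\<Sum>i\<in>I. \<integral>x. L i x \<partial>M)"
    using c L_int by (cases "c = 0") simp_all
qed

locale mixed_sample_learner =
  M: prob_space M + mu: prob_space \<mu> + mu': prob_space \<mu>'
  for M :: "'a measure" and MW :: "'w measure" and \<mu> \<mu>' :: "'z measure"
    and loss :: "'w \<Rightarrow> 'z \<Rightarrow> real" and W :: "'a \<Rightarrow> 'w" and Z :: "nat \<Rightarrow> 'a \<Rightarrow> 'z"
    and n k :: nat and \<alpha> \<beta> :: real +
  assumes sets_mu: "sets \<mu> = sets \<mu>'"
    and loss_meas[measurable]: "(\<lambda>(w, z). loss w z) \<in> borel_measurable (MW \<Otimes>\<^sub>M \<mu>')"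
    and loss_nonneg: "\<And>w z. 0 \<le> loss w z"
    and n_pos: "0 < n" and beta: "0 < \<beta>" "\<beta> < 1" and k_def: "real k = \<beta> * real n"
    and alpha: "0 \<le> \<alpha>" "\<alpha> \<le> 1"
    and W_meas[measurable]: "W \<in> measurable M MW"
    and Z_meas: "\<And>i. i \<in> {1..n} \<Longrightarrow> Z i \<in> measurable M \<mu>'"
    and distr_target: "\<And>i. i \<in> {1..k} \<Longrightarrow> distr M \<mu>' (Z i) = \<mu>'"
    and distr_source: "\<And>i. i \<in> {k+1..n} \<Longrightarrow> distr M \<mu>' (Z i) = \<mu>"
    and gen_int: "integrable M (\<lambda>x. gen_err loss \<mu>' \<alpha> \<beta> k n (W x) (\<lambda>i. Z i x))"
    and loss_int: "integrable (distr M MW W \<Otimes>\<^sub>M \<mu>') (\<lambda>(w, z). loss w z)"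
begin

abbreviation "PW \<equiv> distr M MW W"

abbreviation "indep_law \<equiv> PW \<Otimes>\<^sub>M \<mu>'"

abbreviation "joint_law i \<equiv> distr M (MW \<Otimes>\<^sub>M \<mu>') (\<lambda>x. (W x, Z i x))"

abbreviation "risk \<equiv> \<integral>(w, z). loss w z \<partial>indep_law"

abbreviation "sample_risk i \<equiv> \<integral>x. loss (W x) (Z i x) \<partial>M"

lemma prob_space_PW: "prob_space PW"
  by (rule M.prob_space_distr) simp

lemma prob_space_indep_law: "prob_space indep_law"
  by (intro prob_space_pair prob_space_PW mu'.prob_space_axioms)

lemma sets_indep_law: "sets indep_law = sets (MW \<Otimes>\<^sub>M \<mu>')"
  by (intro sets_pair_measure_cong) simp_all

lemma borel_measurable_sample_loss: "i \<in> {1..n} \<Longrightarrow> (\<lambda>x. loss (W x) (Z i x)) \<in> borel_measurable M"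
  using measurable_Pair[OF W_meas Z_meas] loss_meas by (auto dest: measurable_compose)

lemma k_less_n: "k < n"
proof -
  have "real k < real n"
    using k_def beta n_pos by simp
  then show ?thesis
    by simp
qed

lemma weight_target: "real k * (\<alpha> / (\<beta> * real n)) = \<alpha>"
  using k_def beta n_pos by simp

lemma weight_source: "real (n - k) * ((1 - \<alpha>) / ((1 - \<beta>) * real n)) = 1 - \<alpha>"
proof -
  have "real (n - k) = (1 - \<beta>) * real n"
    using k_less_n k_def by (simp add: of_nat_diff algebra_simps)
  then show ?thesis
    using beta n_pos by simp
qed

lemma
  shows integrable_pop_risk: "integrable M (\<lambda>x. pop_risk loss \<mu>' (W x))"
    and integral_pop_risk: "(\<integral>x. pop_risk loss \<mu>' (W x) \<partial>M) = risk"
proof -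
  interpret pair_sigma_finite PW \<mu>'
    using prob_space_PW by (simp add: pair_sigma_finite_def prob_space_imp_sigma_finite
        mu'.sigma_finite_measure_axioms)
  have [measurable]: "(\<lambda>w. pop_risk loss \<mu>' w) \<in> borel_measurable MW"
    unfolding pop_risk_def by (rule mu'.borel_measurable_lebesgue_integral) simp
  show "integrable M (\<lambda>x. pop_risk loss \<mu>' (W x))"
    using integrable_fst'[OF loss_int] by (simp add: pop_risk_def integrable_distr_eq)
  show "(\<integral>x. pop_risk loss \<mu>' (W x) \<partial>M) = risk"
    using integral_fst'[OF loss_int] by (simp add: pop_risk_def integral_distr)
qed

lemma
  shows integrable_weighted_target_loss:
      "integrable M (\<lambda>x. \<alpha> / (\<beta> * real n) * (\<Sum>i\<in>{1..k}. loss (W x) (Z i x)))"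
    and integrable_weighted_source_loss:
      "integrable M (\<lambda>x. (1 - \<alpha>) / ((1 - \<beta>) * real n) * (\<Sum>i\<in>{k+1..n}. loss (W x) (Z i x)))"
proof -
  define T where "T x = \<alpha> / (\<beta> * real n) * (\<Sum>i\<in>{1..k}. loss (W x) (Z i x))" for x
  define S where "S x = (1 - \<alpha>) / ((1 - \<beta>) * real n) * (\<Sum>i\<in>{k+1..n}. loss (W x) (Z i x))" for x
  have "integrable M (\<lambda>x. Lhat loss \<alpha> \<beta> k n (W x) (\<lambda>i. Z i x))"
    using Bochner_Integration.integrable_diff[OF integrable_pop_risk gen_int]
    by (simp add: gen_err_def)
  then have TS_int: "integrable M (\<lambda>x. T x + S x)" and ST_int: "integrable M (\<lambda>x. S x + T x)"
    by (simp_all add: Lhat_def T_def S_def add.commute)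
  have nonneg: "0 \<le> T x" "0 \<le> S x" for x
    using alpha beta by (simp_all add: T_def S_def sum_nonneg loss_nonneg)
  have "T \<in> borel_measurable M" "S \<in> borel_measurable M"
    unfolding T_def S_def using borel_measurable_sample_loss k_less_n
    by (auto intro!: borel_measurable_times borel_measurable_sum)
  then show "integrable M T" "integrable M S"
    using integrable_nonneg_add_left[OF TS_int] integrable_nonneg_add_left[OF ST_int] nonneg
    by blast+
qed

lemma integrable_sample_loss:
  assumes "(0 < \<alpha> \<and> i \<in> {1..k}) \<or> (\<alpha> < 1 \<and> i \<in> {k+1..n})"
  shows "integrable M (\<lambda>x. loss (W x) (Z i x))"
  using assms k_less_n beta n_pos loss_nonneg borel_measurable_sample_loss
    integral_weighted_sum_nonneg(2)[OF _ _ integrable_weighted_target_loss, of i]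
    integral_weighted_sum_nonneg(2)[OF _ _ integrable_weighted_source_loss, of i]
  by auto

lemma expected_gen_err_eq:
  "(\<integral>x. gen_err loss \<mu>' \<alpha> \<beta> k n (W x) (\<lambda>i. Z i x) \<partial>M)
    = \<alpha> / (\<beta> * real n) * (\<Sum>i\<in>{1..k}. risk - sample_risk i)
      + (1 - \<alpha>) / ((1 - \<beta>) * real n) * (\<Sum>i\<in>{k+1..n}. risk - sample_risk i)"
proof -
  define T where "T x = \<alpha> / (\<beta> * real n) * (\<Sum>i\<in>{1..k}. loss (W x) (Z i x))" for x
  define S where "S x = (1 - \<alpha>) / ((1 - \<beta>) * real n) * (\<Sum>i\<in>{k+1..n}. loss (W x) (Z i x))" for x
  have T_int: "integrable M T" and S_int: "integrable M S"
    unfolding T_def S_def by (fact integrable_weighted_target_loss integrable_weighted_source_loss)+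
  have "(\<integral>x. T x \<partial>M) = \<alpha> / (\<beta> * real n) * (\<Sum>i\<in>{1..k}. sample_risk i)"
    unfolding T_def using alpha beta k_less_n loss_nonneg borel_measurable_sample_loss T_int[unfolded T_def]
    by (intro integral_weighted_sum_nonneg(1)) auto
  moreover have "(\<integral>x. S x \<partial>M) = (1 - \<alpha>) / ((1 - \<beta>) * real n) * (\<Sum>i\<in>{k+1..n}. sample_risk i)"
    unfolding S_def using alpha beta loss_nonneg borel_measurable_sample_loss S_int[unfolded S_def]
    by (intro integral_weighted_sum_nonneg(1)) auto
  moreover have "gen_err loss \<mu>' \<alpha> \<beta> k n (W x) (\<lambda>i. Z i x) = pop_risk loss \<mu>' (W x) - (T x + S x)" for x
    by (simp add: gen_err_def Lhat_def T_def S_def)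
  then have "(\<integral>x. gen_err loss \<mu>' \<alpha> \<beta> k n (W x) (\<lambda>i. Z i x) \<partial>M)
      = risk - ((\<integral>x. T x \<partial>M) + (\<integral>x. S x \<partial>M))"
    using integrable_pop_risk T_int S_int by (simp add: integral_pop_risk)
  ultimately have "(\<integral>x. gen_err loss \<mu>' \<alpha> \<beta> k n (W x) (\<lambda>i. Z i x) \<partial>M)
      = risk - (\<alpha> / (\<beta> * real n) * (\<Sum>i\<in>{1..k}. sample_risk i)
          + (1 - \<alpha>) / ((1 - \<beta>) * real n) * (\<Sum>i\<in>{k+1..n}. sample_risk i))"
    by simp
  also have "\<dots> = \<alpha> / (\<beta> * real n) * (real k * risk - (\<Sum>i\<in>{1..k}. sample_risk i))
      + (1 - \<alpha>) / ((1 - \<beta>) * real n) * (real (n - k) * risk - (\<Sum>i\<in>{k+1..n}. sample_risk i))"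
  proof -
    have rearrange: "r - (a * x + b * y) = a * (p * r - x) + b * (q * r - y)"
      if "p * a + q * b = 1" for r a b x y p q :: real
      using that by algebra
    show ?thesis
      by (rule rearrange) (simp only: weight_target weight_source diff_add_cancel)
  qed
  also have "\<dots> = \<alpha> / (\<beta> * real n) * (\<Sum>i\<in>{1..k}. risk - sample_risk i)
      + (1 - \<alpha>) / ((1 - \<beta>) * real n) * (\<Sum>i\<in>{k+1..n}. risk - sample_risk i)"
    by (simp add: sum_subtractf)
  finally show ?thesis .
qed

lemma sets_joint_law: "sets (joint_law i) = sets indep_law"
  by (simp add: sets_indep_law)

lemma prob_space_joint_law: "i \<in> {1..n} \<Longrightarrow> prob_space (joint_law i)"
  using Z_meas by (intro M.prob_space_distr) simp

lemma sample_deviation_le_KL_ext: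
  assumes i: "i \<in> {1..n}" and loss_i_int: "integrable M (\<lambda>x. loss (W x) (Z i x))"
    and exp_int: "integrable indep_law (\<lambda>(w, z). exp (l * (loss w z - risk)))"
  shows "ereal (l * (sample_risk i - risk))
    \<le> KL_ext (exp 1) indep_law (joint_law i)
      + ereal (ln (\<integral>(w, z). exp (l * (loss w z - risk)) \<partial>indep_law))"
proof -
  have [measurable]: "Z i \<in> measurable M \<mu>'"
    using Z_meas i by simp
  define f where "f = (\<lambda>(w, z). l * (loss w z - risk))"
  have f_meas[measurable]: "f \<in> borel_measurable (MW \<Otimes>\<^sub>M \<mu>')"
    unfolding f_def by measurable
  have "integrable M (\<lambda>x. l * (loss (W x) (Z i x) - risk))"
    using loss_i_int by simp
  then have f_int: "integrable (joint_law i) f"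
    by (subst integrable_distr_eq) (simp_all add: f_def)
  have "(\<integral>x. f x \<partial>joint_law i) = (\<integral>x. l * (loss (W x) (Z i x) - risk) \<partial>M)"
    by (subst integral_distr) (simp_all add: f_def)
  also have "\<dots> = l * (sample_risk i - risk)"
    using loss_i_int by (simp add: M.prob_space)
  finally have f_integral: "(\<integral>x. f x \<partial>joint_law i) = l * (sample_risk i - risk)" .
  have exp_f: "(\<lambda>x. exp (f x)) = (\<lambda>(w, z). exp (l * (loss w z - risk)))"
    by (auto simp: f_def)
  have "ereal (\<integral>x. f x \<partial>joint_law i)
      \<le> KL_ext (exp 1) indep_law (joint_law i) + ereal (ln (\<integral>x. exp (f x) \<partial>indep_law))"
    using exp_int f_int prob_space_joint_law[OF i] sets_joint_law
    by (intro integral_le_KL_ext_plus_ln_integral_exp prob_space_indep_law)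
      (simp_all add: sets_indep_law exp_f cong: measurable_cong_sets)
  then show ?thesis
    unfolding f_integral exp_f .
qed

lemma KL_ext_joint_law_target:
  "i \<in> {1..k} \<Longrightarrow> KL_ext (exp 1) indep_law (joint_law i) = MI_ext (exp 1) M MW \<mu>' W (Z i)"
  by (simp add: MI_ext_def distr_target)

lemma KL_ext_joint_law_source_le:
  assumes i: "i \<in> {k+1..n}"
  shows "KL_ext (exp 1) indep_law (joint_law i) \<le> MI_ext (exp 1) M MW \<mu>' W (Z i) + KL_ext (exp 1) \<mu>' \<mu>"
proof -
  have i': "i \<in> {1..n}"
    using i by simp
  have [measurable]: "Z i \<in> measurable M \<mu>'"
    using Z_meas i' by simp
  have "distr (joint_law i) \<mu>' snd = \<mu>"
    by (subst distr_distr) (simp_all add: comp_def distr_source[OF i])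
  then have "KL_ext (exp 1) indep_law (joint_law i)
      \<le> KL_ext (exp 1) (PW \<Otimes>\<^sub>M \<mu>) (joint_law i) + KL_ext (exp 1) \<mu>' \<mu>"
    using prob_space_joint_law[OF i'] sets_joint_law
    by (intro KL_ext_pair_measure_le prob_space_PW mu.prob_space_axioms mu'.prob_space_axioms sets_mu)
  then show ?thesis
    by (simp add: MI_ext_def distr_source[OF i])
qed

lemma sample_deviation_le_psi_inv:
  fixes bm bp :: real and \<psi> :: "real \<Rightarrow> real" and D :: ereal
  assumes b: "bm < 0" "0 < bp"
    and cgf_int: "\<And>l. l \<in> {bm<..<bp} \<Longrightarrow>
        integrable indep_law (\<lambda>(w, z). exp (l * (loss w z - risk)))"
    and cgf_bound: "\<And>l. l \<in> {bm<..<bp} \<Longrightarrow>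
        ln (\<integral>(w, z). exp (l * (loss w z - risk)) \<partial>indep_law) \<le> \<psi> l"
    and i: "i \<in> {1..n}" and loss_i_int: "integrable M (\<lambda>x. loss (W x) (Z i x))"
    and D: "KL_ext (exp 1) indep_law (joint_law i) \<le> D"
  shows "ereal (risk - sample_risk i) \<le> psi_inv (\<lambda>l. \<psi> (- l)) (- bm) D"
    and "ereal (sample_risk i - risk) \<le> psi_inv \<psi> bp D"
proof -
  have "ereal (l * (sample_risk i - risk)) \<le> D + ereal (\<psi> l)" if l: "l \<in> {bm<..<bp}" for l
  proof -
    have "ereal (l * (sample_risk i - risk))
        \<le> KL_ext (exp 1) indep_law (joint_law i)
          + ereal (ln (\<integral>(w, z). exp (l * (loss w z - risk)) \<partial>indep_law))"
      by (rule sample_deviation_le_KL_ext[OF i loss_i_int cgf_int[OF l]])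
    also have "\<dots> \<le> D + ereal (\<psi> l)"
      using D cgf_bound[OF l] by (intro add_mono) simp_all
    finally show ?thesis .
  qed
  from psi_inv_bounds[OF b this] show "ereal (risk - sample_risk i) \<le> psi_inv (\<lambda>l. \<psi> (- l)) (- bm) D"
    and "ereal (sample_risk i - risk) \<le> psi_inv \<psi> bp D"
    by simp_all
qed

lemma expected_gen_err_bounds:
  fixes bm bp :: real and \<psi> :: "real \<Rightarrow> real"
  assumes b: "bm < 0" "0 < bp"
    and cgf_int: "\<And>l. l \<in> {bm<..<bp} \<Longrightarrow>
        integrable indep_law (\<lambda>(w, z). exp (l * (loss w z - risk)))"
    and cgf_bound: "\<And>l. l \<in> {bm<..<bp} \<Longrightarrow>
        ln (\<integral>(w, z). exp (l * (loss w z - risk)) \<partial>indep_law) \<le> \<psi> l"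
  shows "ereal (\<integral>x. gen_err loss \<mu>' \<alpha> \<beta> k n (W x) (\<lambda>i. Z i x) \<partial>M)
           \<le> ereal (\<alpha> / (\<beta> * real n)) *
               (\<Sum>i\<in>{1..k}. psi_inv (\<lambda>l. \<psi> (- l)) (- bm) (MI_ext (exp 1) M MW \<mu>' W (Z i)))
             + ereal ((1 - \<alpha>) / ((1 - \<beta>) * real n)) *
               (\<Sum>i\<in>{k+1..n}. psi_inv (\<lambda>l. \<psi> (- l)) (- bm)
                   (MI_ext (exp 1) M MW \<mu>' W (Z i) + KL_ext (exp 1) \<mu>' \<mu>))
       \<and> - ereal (\<integral>x. gen_err loss \<mu>' \<alpha> \<beta> k n (W x) (\<lambda>i. Z i x) \<partial>M)
           \<le> ereal (\<alpha> / (\<beta> * real n)) *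
               (\<Sum>i\<in>{1..k}. psi_inv \<psi> bp (MI_ext (exp 1) M MW \<mu>' W (Z i)))
             + ereal ((1 - \<alpha>) / ((1 - \<beta>) * real n)) *
               (\<Sum>i\<in>{k+1..n}. psi_inv \<psi> bp
                   (MI_ext (exp 1) M MW \<mu>' W (Z i) + KL_ext (exp 1) \<mu>' \<mu>))"
proof -
  have target: "ereal (risk - sample_risk i) \<le> psi_inv (\<lambda>l. \<psi> (- l)) (- bm) (MI_ext (exp 1) M MW \<mu>' W (Z i))
      \<and> ereal (sample_risk i - risk) \<le> psi_inv \<psi> bp (MI_ext (exp 1) M MW \<mu>' W (Z i))"
    if "0 < \<alpha> / (\<beta> * real n)" "i \<in> {1..k}" for i
    using that alpha beta n_pos k_less_n KL_ext_joint_law_target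
    by (intro conjI sample_deviation_le_psi_inv[OF b cgf_int cgf_bound] integrable_sample_loss)
      (auto simp: zero_less_divide_iff)
  have source: "ereal (risk - sample_risk i)
        \<le> psi_inv (\<lambda>l. \<psi> (- l)) (- bm) (MI_ext (exp 1) M MW \<mu>' W (Z i) + KL_ext (exp 1) \<mu>' \<mu>)
      \<and> ereal (sample_risk i - risk)
        \<le> psi_inv \<psi> bp (MI_ext (exp 1) M MW \<mu>' W (Z i) + KL_ext (exp 1) \<mu>' \<mu>)"
    if "0 < (1 - \<alpha>) / ((1 - \<beta>) * real n)" "i \<in> {k+1..n}" for i
    using that alpha beta n_pos KL_ext_joint_law_source_le
    by (intro conjI sample_deviation_le_psi_inv[OF b cgf_int cgf_bound] integrable_sample_loss)
      (auto simp: zero_less_divide_iff)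
  have weights: "0 \<le> \<alpha> / (\<beta> * real n)" "0 \<le> (1 - \<alpha>) / ((1 - \<beta>) * real n)"
    using alpha beta by simp_all
  have "ereal (\<integral>x. gen_err loss \<mu>' \<alpha> \<beta> k n (W x) (\<lambda>i. Z i x) \<partial>M)
      = ereal (\<alpha> / (\<beta> * real n) * (\<Sum>i\<in>{1..k}. risk - sample_risk i))
        + ereal ((1 - \<alpha>) / ((1 - \<beta>) * real n) * (\<Sum>i\<in>{k+1..n}. risk - sample_risk i))"
    by (simp add: expected_gen_err_eq)
  also have "\<dots> \<le> ereal (\<alpha> / (\<beta> * real n)) *
               (\<Sum>i\<in>{1..k}. psi_inv (\<lambda>l. \<psi> (- l)) (- bm) (MI_ext (exp 1) M MW \<mu>' W (Z i)))
             + ereal ((1 - \<alpha>) / ((1 - \<beta>) * real n)) *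
               (\<Sum>i\<in>{k+1..n}. psi_inv (\<lambda>l. \<psi> (- l)) (- bm)
                   (MI_ext (exp 1) M MW \<mu>' W (Z i) + KL_ext (exp 1) \<mu>' \<mu>))"
    using target source by (intro add_mono ereal_mult_sum_le weights) blast+
  finally have upper: "ereal (\<integral>x. gen_err loss \<mu>' \<alpha> \<beta> k n (W x) (\<lambda>i. Z i x) \<partial>M) \<le> \<dots>" .
  have "(\<Sum>i\<in>I. sample_risk i - risk) = - (\<Sum>i\<in>I. risk - sample_risk i)" for I
    by (simp add: sum_negf[symmetric])
  then have "- ereal (\<integral>x. gen_err loss \<mu>' \<alpha> \<beta> k n (W x) (\<lambda>i. Z i x) \<partial>M)
      = ereal (\<alpha> / (\<beta> * real n) * (\<Sum>i\<in>{1..k}. sample_risk i - risk))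
        + ereal ((1 - \<alpha>) / ((1 - \<beta>) * real n) * (\<Sum>i\<in>{k+1..n}. sample_risk i - risk))"
    by (simp add: expected_gen_err_eq)
  also have "\<dots> \<le> ereal (\<alpha> / (\<beta> * real n)) *
               (\<Sum>i\<in>{1..k}. psi_inv \<psi> bp (MI_ext (exp 1) M MW \<mu>' W (Z i)))
             + ereal ((1 - \<alpha>) / ((1 - \<beta>) * real n)) *
               (\<Sum>i\<in>{k+1..n}. psi_inv \<psi> bp
                   (MI_ext (exp 1) M MW \<mu>' W (Z i) + KL_ext (exp 1) \<mu>' \<mu>))"
    using target source by (intro add_mono ereal_mult_sum_le weights) blast+
  finally show ?thesis
    using upper by blast
qed

end

theorem theorem1:
  fixes M :: "'a measure" and MW :: "'w measure" and \<mu> \<mu>' :: "'z measure"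
    and loss :: "'w \<Rightarrow> 'z \<Rightarrow> real" and W :: "'a \<Rightarrow> 'w" and Z :: "nat \<Rightarrow> 'a \<Rightarrow> 'z"
    and n k :: nat and \<alpha> \<beta> bm bp :: real and \<psi> :: "real \<Rightarrow> real"
  assumes M: "prob_space M"
    and mu: "prob_space \<mu>" and mu': "prob_space \<mu>'" and sets_mu: "sets \<mu> = sets \<mu>'"
    and ac: "absolutely_continuous \<mu>' \<mu>"
    and loss_meas: "(\<lambda>(w, z). loss w z) \<in> borel_measurable (MW \<Otimes>\<^sub>M \<mu>')"
    and loss_nonneg: "\<And>w z. 0 \<le> loss w z"
    and n_pos: "0 < n" and beta: "0 < \<beta>" "\<beta> < 1" and k_def: "real k = \<beta> * real n"
    and alpha: "0 \<le> \<alpha>" "\<alpha> \<le> 1"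
    and indep: "prob_space.indep_vars M (\<lambda>_. \<mu>') Z {1..n}"
    and distr_target: "\<And>i. i \<in> {1..k} \<Longrightarrow> distr M \<mu>' (Z i) = \<mu>'"
    and distr_source: "\<And>i. i \<in> {k+1..n} \<Longrightarrow> distr M \<mu>' (Z i) = \<mu>"
    and W_meas: "W \<in> measurable M MW"
    and ERM: "AE x in M. \<forall>w\<in>space MW.
                 Lhat loss \<alpha> \<beta> k n (W x) (\<lambda>i. Z i x) \<le> Lhat loss \<alpha> \<beta> k n w (\<lambda>i. Z i x)"
    and gen_int: "integrable M (\<lambda>x. gen_err loss \<mu>' \<alpha> \<beta> k n (W x) (\<lambda>i. Z i x))"
    and b: "bm < 0" "0 < bp"
    and loss_int: "integrable (distr M MW W \<Otimes>\<^sub>M \<mu>') (\<lambda>(w, z). loss w z)"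
    and cgf_int: "\<And>l. l \<in> {bm<..<bp} \<Longrightarrow>
        integrable (distr M MW W \<Otimes>\<^sub>M \<mu>')
          (\<lambda>(w, z). exp (l * (loss w z - (\<integral>(w', z'). loss w' z' \<partial>(distr M MW W \<Otimes>\<^sub>M \<mu>')))))"
    and cgf_bound: "\<And>l. l \<in> {bm<..<bp} \<Longrightarrow>
        ln (\<integral>(w, z). exp (l * (loss w z - (\<integral>(w', z'). loss w' z' \<partial>(distr M MW W \<Otimes>\<^sub>M \<mu>'))))
              \<partial>(distr M MW W \<Otimes>\<^sub>M \<mu>')) \<le> \<psi> l"
  shows "ereal (\<integral>x. gen_err loss \<mu>' \<alpha> \<beta> k n (W x) (\<lambda>i. Z i x) \<partial>M)
           \<le> ereal (\<alpha> / (\<beta> * real n)) *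
               (\<Sum>i\<in>{1..k}. psi_inv (\<lambda>l. \<psi> (- l)) (- bm) (MI_ext (exp 1) M MW \<mu>' W (Z i)))
             + ereal ((1 - \<alpha>) / ((1 - \<beta>) * real n)) *
               (\<Sum>i\<in>{k+1..n}. psi_inv (\<lambda>l. \<psi> (- l)) (- bm)
                   (MI_ext (exp 1) M MW \<mu>' W (Z i) + KL_ext (exp 1) \<mu>' \<mu>))
       \<and> - ereal (\<integral>x. gen_err loss \<mu>' \<alpha> \<beta> k n (W x) (\<lambda>i. Z i x) \<partial>M)
           \<le> ereal (\<alpha> / (\<beta> * real n)) *
               (\<Sum>i\<in>{1..k}. psi_inv \<psi> bp (MI_ext (exp 1) M MW \<mu>' W (Z i)))
             + ereal ((1 - \<alpha>) / ((1 - \<beta>) * real n)) *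
               (\<Sum>i\<in>{k+1..n}. psi_inv \<psi> bp
                   (MI_ext (exp 1) M MW \<mu>' W (Z i) + KL_ext (exp 1) \<mu>' \<mu>))"
proof -
  have Z_meas: "Z i \<in> measurable M \<mu>'" if "i \<in> {1..n}" for i
    using indep that by (simp add: prob_space.indep_vars_def[OF M])
  interpret mixed_sample_learner M MW \<mu> \<mu>' loss W Z n k \<alpha> \<beta>
    by (intro mixed_sample_learner.intro mixed_sample_learner_axioms.intro M mu mu')
      (fact sets_mu loss_meas loss_nonneg n_pos beta k_def alpha W_meas Z_meas distr_target
        distr_source gen_int loss_int)+
  show ?thesis
    by (rule expected_gen_err_bounds[OF b cgf_int cgf_bound])
qed

end
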